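(* Let $\nu\in\mathcal P_{2,0}(\mathbb R^d)$ and let $\mathcal D\subset\mathcal P_2(\mathbb R^d)$ be a nonempty, translation invariant cone. Define $$P_1=\sup\Big\{\int\langle x,y\rangle\,d\pi(x,y):\ \mu\in\mathcal D\cap\mathcal P_{2,0}(\mathbb R^d),\ \pi\in\Pi(\mu,\nu),\ \operatorname{Var}(\mu)\le1\Big\}.$$ Suppose $P_1>0$. Then: (a) if $(\hat\mu,\hat\pi)$ attains $P_1$, then $\operatorname{Var}(\hat\mu)=1$ and the dilation $(P_1)_\#\hat\mu$ maximizes $\operatorname{Var}$ over $\mathcal D\cap\mathcal M^K_\nu$; (b) conversely, if $\check\mu\ne\delta_0$ maximizes $\operatorname{Var}$ over $\mathcal D\cap\mathcal M^K_\nu$ and $\check\pi\in\operatorname{argmax}_{\pi\in\Pi(\check\mu,\nu)}\int\langle x,y\rangle d\pi$, then with $\check\lambda=\operatorname{Var}(\check\mu)^{-1/2}$ the pair $(\check\lambda_\#\check\mu,(\check\lambda\times\mathrm{id})_\#\check\pi)$ attains $P_1$. Moreover, $P_1=0$ if and only if the maximal value of $\operatorname{Var}$ over $\mathcal D\cap\mathcal M^K_\nu$ is $0$, in which case $\delta_0$ is a maximizer.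
   Context: $\mathcal P_2(\mathbb R^d)$: Borel probability measures with finite second moment; $\mathcal P_{2,0}$: those with zero mean. $\Pi(\mu,\nu)$: couplings. $\operatorname{Var}(\mu)=\int|x-\int z\,d\mu|^2d\mu$. Kantorovich dominance: $\mu\preceq_K\nu$ iff there is $\pi\in\Pi(\mu,\nu)$ with $\int\langle x-b_\nu,y-x\rangle\,d\pi=0$, $b_\nu=\int y\,d\nu$; $\mathcal M^K_\nu=\{\mu\in\mathcal P_2(\mathbb R^d):\mu\preceq_K\nu\}$. For $\lambda\in\mathbb R$, $\lambda_\#\mu$ is the law of $\lambda X$, $X\sim\mu$, and $(\lambda\times\mathrm{id})(x,y)=(\lambda x,y)$. $\mathcal D$ is a cone if $\lambda_\#\mu\in\mathcal D$ for all $\mu\in\mathcal D,\lambda\ge0$; translation invariant if $(T_k)_\#\mu\in\mathcal D$ for all $\mu\in\mathcal D$, $k\in\mathbb R^d$, $T_k(x)=x+k$. *)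

theory Defs
  imports "HOL-Probability.Probability"
begin

definition P2 :: "'a::euclidean_space measure set" where
  "P2 = {\<mu>. prob_space \<mu> \<and> sets \<mu> = sets borel \<and> integrable \<mu> (\<lambda>x. (norm x)\<^sup>2)}"

definition mean :: "'a::euclidean_space measure \<Rightarrow> 'a" where
  "mean \<mu> = integral\<^sup>L \<mu> (\<lambda>x. x)"

definition P20 :: "'a::euclidean_space measure set" where
  "P20 = {\<mu> \<in> P2. mean \<mu> = 0}"

definition Var :: "'a::euclidean_space measure \<Rightarrow> real" where
  "Var \<mu> = integral\<^sup>L \<mu> (\<lambda>x. (norm (x - mean \<mu>))\<^sup>2)"

definition couplings :: "'a::euclidean_space measure \<Rightarrow> 'a measure \<Rightarrow> ('a \<times> 'a) measure set" where
  "couplings \<mu> \<nu> = {\<pi>. prob_space \<pi> \<and> sets \<pi> = sets borel \<and>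
      distr \<pi> borel fst = \<mu> \<and> distr \<pi> borel snd = \<nu>}"

definition corr :: "('a::euclidean_space \<times> 'a) measure \<Rightarrow> real" where
  "corr \<pi> = integral\<^sup>L \<pi> (\<lambda>(x, y). inner x y)"

definition kdom :: "'a::euclidean_space measure \<Rightarrow> 'a measure \<Rightarrow> bool" where
  "kdom \<mu> \<nu> \<longleftrightarrow> (\<exists>\<pi> \<in> couplings \<mu> \<nu>.
      integral\<^sup>L \<pi> (\<lambda>(x, y). inner (x - mean \<nu>) (y - x)) = 0)"

definition MK :: "'a::euclidean_space measure \<Rightarrow> 'a measure set" where
  "MK \<nu> = {\<mu> \<in> P2. kdom \<mu> \<nu>}"

definition dil :: "real \<Rightarrow> 'a::euclidean_space measure \<Rightarrow> 'a measure" where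
  "dil l \<mu> = distr \<mu> borel (\<lambda>x. l *\<^sub>R x)"

definition dil1 :: "real \<Rightarrow> ('a::euclidean_space \<times> 'a) measure \<Rightarrow> ('a \<times> 'a) measure" where
  "dil1 l \<pi> = distr \<pi> borel (\<lambda>(x, y). (l *\<^sub>R x, y))"

definition is_cone :: "'a::euclidean_space measure set \<Rightarrow> bool" where
  "is_cone D \<longleftrightarrow> (\<forall>\<mu> \<in> D. \<forall>l::real. l \<ge> 0 \<longrightarrow> dil l \<mu> \<in> D)"

definition transl_inv :: "'a::euclidean_space measure set \<Rightarrow> bool" where
  "transl_inv D \<longleftrightarrow> (\<forall>\<mu> \<in> D. \<forall>k. distr \<mu> borel (\<lambda>x. x + k) \<in> D)"

text \<open>The value P_1 (a real supremum; the set is nonempty and bounded above under the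
standing assumptions).\<close>
definition P1 :: "'a::euclidean_space measure set \<Rightarrow> 'a measure \<Rightarrow> real" where
  "P1 D \<nu> = Sup {corr \<pi> | \<mu> \<pi>. \<mu> \<in> D \<inter> P20 \<and> \<pi> \<in> couplings \<mu> \<nu> \<and> Var \<mu> \<le> 1}"

definition attains_P1 :: "'a::euclidean_space measure set \<Rightarrow> 'a measure \<Rightarrow> 'a measure \<Rightarrow> ('a \<times> 'a) measure \<Rightarrow> bool" where
  "attains_P1 D \<nu> \<mu> \<pi> \<longleftrightarrow> \<mu> \<in> D \<inter> P20 \<and> \<pi> \<in> couplings \<mu> \<nu> \<and> Var \<mu> \<le> 1 \<and> corr \<pi> = P1 D \<nu>"

definition maximizes_Var :: "'a::euclidean_space measure set \<Rightarrow> 'a measure \<Rightarrow> bool" where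
  "maximizes_Var S \<mu> \<longleftrightarrow> \<mu> \<in> S \<and> (\<forall>\<mu>' \<in> S. Var \<mu>' \<le> Var \<mu>)"

end

(*
  Let M be the largest variance in D \<inter> MK \<nu>; everything follows from P1 = sqrt M.
  Since \<nu> is centred, a Kantorovich coupling of \<mu> and \<nu> has correlation equal to the
  second moment Var \<mu> + |mean \<mu>|^2. Centring \<mu> and scaling it to unit variance (allowed
  by translation invariance and the cone property) gives an admissible pair for P1 with
  correlation (Var \<mu> + |mean \<mu>|^2) / sqrt (Var \<mu>) \<ge> sqrt (Var \<mu>), so M \<le> P1^2.
  Conversely, an admissible pair (\<mu>, \<pi>) with correlation c > 0, dilated by c / Var \<mu>,
  becomes Kantorovich dominated with variance c^2 / Var \<mu> \<ge> c^2, so P1 \<le> sqrt M.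
  The equality cases force Var \<mu> = 1 for a maximiser of P1 and mean zero for a maximiser
  of the variance.
*)

theory Submission
  imports Defs
begin

lemma P2D:
  assumes "\<mu> \<in> P2"
  shows "prob_space \<mu>" "sets \<mu> = sets borel" "integrable \<mu> (\<lambda>x. (norm x)\<^sup>2)"
  using assms by (auto simp: P2_def)

lemma continuous_measurable_sets_borel:
  assumes "sets M = sets borel" "continuous_on UNIV f"
  shows "f \<in> borel_measurable M"
  using borel_measurable_continuous_onI[OF assms(2)] measurable_cong_sets[OF assms(1) refl] by blast

lemma norm_le_one_plus_square: "norm (x::'a::real_normed_vector) \<le> 1 + (norm x)\<^sup>2"
proof -
  have "0 \<le> (norm x - 1)\<^sup>2" by simp
  then have "norm x * 2 \<le> 1 + norm x * norm x"
    unfolding power2_eq_square by (simp add: algebra_simps)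
  then show ?thesis using norm_ge_zero[of x] unfolding power2_eq_square by linarith
qed

lemma abs_inner_le_half_sum_squares: "\<bar>x \<bullet> y\<bar> \<le> ((norm x)\<^sup>2 + (norm y)\<^sup>2) / 2"
proof -
  have "0 \<le> (norm x - norm y)\<^sup>2" by simp
  then have "2 * (norm x * norm y) \<le> (norm x)\<^sup>2 + (norm y)\<^sup>2"
    unfolding power2_eq_square by (simp add: algebra_simps)
  then show ?thesis using Cauchy_Schwarz_ineq2[of x y] by simp
qed

subsection \<open>Measures with finite second moment\<close>

lemma integrable_id_P2:
  fixes \<mu> :: "'a::euclidean_space measure"
  assumes "\<mu> \<in> P2"
  shows "integrable \<mu> (\<lambda>x. x)"
proof (rule Bochner_Integration.integrable_bound)
  interpret prob_space \<mu> using P2D[OF assms] by simp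
  show "integrable \<mu> (\<lambda>x. 1 + (norm x)\<^sup>2)" using P2D[OF assms] by simp
  show "(\<lambda>x. x) \<in> borel_measurable \<mu>"
    by (rule continuous_measurable_sets_borel[OF P2D(2)[OF assms]]) (intro continuous_intros)
  show "AE x in \<mu>. norm x \<le> norm (1 + (norm x)\<^sup>2)"
    by (rule AE_I2) (use norm_le_one_plus_square in auto)
qed

lemma inner_mean_P2:
  fixes \<mu> :: "'a::euclidean_space measure"
  assumes "\<mu> \<in> P2"
  shows "integrable \<mu> (\<lambda>x. k \<bullet> x)" "(\<integral>x. k \<bullet> x \<partial>\<mu>) = k \<bullet> mean \<mu>"
  using integrable_id_P2[OF assms] by (simp_all add: mean_def)

lemma second_moment_affine:
  fixes \<mu> :: "'a::euclidean_space measure"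
  assumes "\<mu> \<in> P2"
  shows "integrable \<mu> (\<lambda>x. (norm (t *\<^sub>R (x + k)))\<^sup>2)"
    and "(\<integral>x. (norm (t *\<^sub>R (x + k)))\<^sup>2 \<partial>\<mu>)
           = t\<^sup>2 * ((\<integral>x. (norm x)\<^sup>2 \<partial>\<mu>) + 2 * (mean \<mu> \<bullet> k) + (norm k)\<^sup>2)"
proof -
  interpret prob_space \<mu> using P2D[OF assms] by simp
  have "(norm (x + k))\<^sup>2 = (norm x)\<^sup>2 + 2 * (x \<bullet> k) + (norm k)\<^sup>2" for x
    by (simp add: power2_norm_eq_inner inner_add inner_commute)
  then have expand: "(norm (t *\<^sub>R (x + k)))\<^sup>2 = t\<^sup>2 * ((norm x)\<^sup>2 + 2 * (x \<bullet> k) + (norm k)\<^sup>2)" for x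
    by (simp add: power_mult_distrib)
  have "integrable \<mu> (\<lambda>x. (norm x)\<^sup>2)" "integrable \<mu> (\<lambda>x. x \<bullet> k)"
    using P2D(3)[OF assms] integrable_id_P2[OF assms] by simp_all
  then show "integrable \<mu> (\<lambda>x. (norm (t *\<^sub>R (x + k)))\<^sup>2)"
    and "(\<integral>x. (norm (t *\<^sub>R (x + k)))\<^sup>2 \<partial>\<mu>)
           = t\<^sup>2 * ((\<integral>x. (norm x)\<^sup>2 \<partial>\<mu>) + 2 * (mean \<mu> \<bullet> k) + (norm k)\<^sup>2)"
    unfolding expand using integrable_id_P2[OF assms] by (simp_all add: mean_def prob_space)
qed

lemma Var_eq_second_moment:
  fixes \<mu> :: "'a::euclidean_space measure"
  assumes "\<mu> \<in> P2"
  shows "Var \<mu> = (\<integral>x. (norm x)\<^sup>2 \<partial>\<mu>) - (norm (mean \<mu>))\<^sup>2"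
  using second_moment_affine(2)[OF assms, of 1 "- mean \<mu>"]
  by (simp add: Var_def power2_norm_eq_inner)

lemma Var_nonneg [simp]: "0 \<le> Var \<mu>"
  unfolding Var_def by (rule integral_nonneg_AE) simp

lemma second_moment_P20: "\<mu> \<in> P20 \<Longrightarrow> (\<integral>x. (norm x)\<^sup>2 \<partial>\<mu>) = Var \<mu>"
  using Var_eq_second_moment[of \<mu>] by (simp add: P20_def)

lemma P2_affine_image:
  fixes \<mu> :: "'a::euclidean_space measure" and t :: real and k :: 'a
  assumes "\<mu> \<in> P2"
  defines "\<mu>' \<equiv> distr \<mu> borel (\<lambda>x. t *\<^sub>R (x + k))"
  shows "\<mu>' \<in> P2"
    and "mean \<mu>' = t *\<^sub>R (mean \<mu> + k)"
    and "Var \<mu>' = t\<^sup>2 * Var \<mu>"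
    and "(\<integral>x. (norm x)\<^sup>2 \<partial>\<mu>') = t\<^sup>2 * ((\<integral>x. (norm x)\<^sup>2 \<partial>\<mu>) + 2 * (mean \<mu> \<bullet> k) + (norm k)\<^sup>2)"
proof -
  interpret prob_space \<mu> using P2D[OF assms(1)] by simp
  have f: "(\<lambda>x. t *\<^sub>R (x + k)) \<in> measurable \<mu> borel"
    by (rule continuous_measurable_sets_borel[OF P2D(2)[OF assms(1)]]) (intro continuous_intros)
  show "\<mu>' \<in> P2"
    unfolding P2_def \<mu>'_def using prob_space_distr[OF f] second_moment_affine(1)[OF assms(1)]
    by (simp add: integrable_distr_eq[OF f])
  show mean: "mean \<mu>' = t *\<^sub>R (mean \<mu> + k)"
    unfolding mean_def \<mu>'_def integral_distr[OF f measurable_ident_sets[OF refl]]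
    using integrable_id_P2[OF assms(1)] by (simp add: prob_space)
  show "(\<integral>x. (norm x)\<^sup>2 \<partial>\<mu>') = t\<^sup>2 * ((\<integral>x. (norm x)\<^sup>2 \<partial>\<mu>) + 2 * (mean \<mu> \<bullet> k) + (norm k)\<^sup>2)"
    unfolding \<mu>'_def integral_distr[OF f borel_measurable_power[OF borel_measurable_norm]]
    by (rule second_moment_affine(2)[OF assms(1)])
  have "t *\<^sub>R (x + k) - t *\<^sub>R (mean \<mu> + k) = t *\<^sub>R (x - mean \<mu>)" for x
    by (simp add: algebra_simps)
  then show "Var \<mu>' = t\<^sup>2 * Var \<mu>"
    unfolding Var_def mean unfolding \<mu>'_def by (simp add: integral_distr[OF f] power_mult_distrib)
qed

lemma dil_eq_affine_image: "dil t \<mu> = distr \<mu> borel (\<lambda>x. t *\<^sub>R (x + 0))"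
  unfolding dil_def by simp

lemma P2_dil:
  fixes \<mu> :: "'a::euclidean_space measure"
  assumes "\<mu> \<in> P2"
  shows "dil t \<mu> \<in> P2" "mean (dil t \<mu>) = t *\<^sub>R mean \<mu>" "Var (dil t \<mu>) = t\<^sup>2 * Var \<mu>"
    "(\<integral>x. (norm x)\<^sup>2 \<partial>dil t \<mu>) = t\<^sup>2 * (\<integral>x. (norm x)\<^sup>2 \<partial>\<mu>)"
  using P2_affine_image[OF assms, of t 0] unfolding dil_eq_affine_image by simp_all

lemma dil_zero_eq_return:
  assumes "prob_space \<mu>"
  shows "dil 0 \<mu> = return borel 0"
  using prob_space.distr_const[OF assms, of 0 borel] by (simp add: dil_def)

subsection \<open>Couplings\<close>

lemma couplingsD:
  assumes "\<pi> \<in> couplings \<mu> \<nu>"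
  shows "prob_space \<pi>" "sets \<pi> = sets borel" "distr \<pi> borel fst = \<mu>" "distr \<pi> borel snd = \<nu>"
  using assms by (auto simp: couplings_def)

lemma measurable_fst_snd_sets_borel:
  fixes \<pi> :: "('a::euclidean_space \<times> 'a) measure"
  assumes "sets \<pi> = sets borel"
  shows "fst \<in> borel_measurable \<pi>" "snd \<in> borel_measurable \<pi>"
  by (rule continuous_measurable_sets_borel[OF assms], intro continuous_intros)+

lemma coupling_integral_fst:
  fixes f :: "'a::euclidean_space \<Rightarrow> real"
  assumes "\<pi> \<in> couplings \<mu> \<nu>" "f \<in> borel_measurable borel"
  shows "integrable \<pi> (\<lambda>p. f (fst p)) \<longleftrightarrow> integrable \<mu> f"
    and "(\<integral>p. f (fst p) \<partial>\<pi>) = (\<integral>x. f x \<partial>\<mu>)"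
  using integrable_distr_eq[OF measurable_fst_snd_sets_borel(1)[OF couplingsD(2)[OF assms(1)]] assms(2)]
    integral_distr[OF measurable_fst_snd_sets_borel(1)[OF couplingsD(2)[OF assms(1)]] assms(2)]
    couplingsD(3)[OF assms(1)]
  by simp_all

lemma coupling_integral_snd:
  fixes f :: "'a::euclidean_space \<Rightarrow> real"
  assumes "\<pi> \<in> couplings \<mu> \<nu>" "f \<in> borel_measurable borel"
  shows "integrable \<pi> (\<lambda>p. f (snd p)) \<longleftrightarrow> integrable \<nu> f"
    and "(\<integral>p. f (snd p) \<partial>\<pi>) = (\<integral>y. f y \<partial>\<nu>)"
  using integrable_distr_eq[OF measurable_fst_snd_sets_borel(2)[OF couplingsD(2)[OF assms(1)]] assms(2)]
    integral_distr[OF measurable_fst_snd_sets_borel(2)[OF couplingsD(2)[OF assms(1)]] assms(2)]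
    couplingsD(4)[OF assms(1)]
  by simp_all

lemma corr_eq_integral: "corr \<pi> = (\<integral>p. fst p \<bullet> snd p \<partial>\<pi>)"
  unfolding corr_def by (simp add: case_prod_unfold)

lemma integrable_coupling_P2:
  fixes \<mu> \<nu> :: "'a::euclidean_space measure"
  assumes "\<pi> \<in> couplings \<mu> \<nu>" "\<mu> \<in> P2" "\<nu> \<in> P2"
  shows "integrable \<pi> (\<lambda>p. (norm (fst p))\<^sup>2)" "integrable \<pi> (\<lambda>p. (norm (snd p))\<^sup>2)"
    and "integrable \<pi> (\<lambda>p. fst p \<bullet> snd p)"
    and "integrable \<pi> (\<lambda>p. k \<bullet> snd p)"
proof -
  have sq: "(\<lambda>x::'a. (norm x)\<^sup>2) \<in> borel_measurable borel" by simp
  show fst_sq: "integrable \<pi> (\<lambda>p. (norm (fst p))\<^sup>2)"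
    using coupling_integral_fst(1)[OF assms(1) sq] P2D(3)[OF assms(2)] by simp
  show snd_sq: "integrable \<pi> (\<lambda>p. (norm (snd p))\<^sup>2)"
    using coupling_integral_snd(1)[OF assms(1) sq] P2D(3)[OF assms(3)] by simp
  show "integrable \<pi> (\<lambda>p. fst p \<bullet> snd p)"
  proof (rule Bochner_Integration.integrable_bound)
    show "integrable \<pi> (\<lambda>p. (norm (fst p))\<^sup>2 + (norm (snd p))\<^sup>2)" using fst_sq snd_sq by simp
    show "(\<lambda>p. fst p \<bullet> snd p) \<in> borel_measurable \<pi>"
      by (rule continuous_measurable_sets_borel[OF couplingsD(2)[OF assms(1)]]) (intro continuous_intros)
    show "AE p in \<pi>. norm (fst p \<bullet> snd p) \<le> norm ((norm (fst p))\<^sup>2 + (norm (snd p))\<^sup>2)"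
    proof (rule AE_I2)
      fix p :: "'a \<times> 'a"
      have "\<bar>fst p \<bullet> snd p\<bar> \<le> (norm (fst p))\<^sup>2 + (norm (snd p))\<^sup>2"
        using abs_inner_le_half_sum_squares[of "fst p" "snd p"] by simp
      then show "norm (fst p \<bullet> snd p) \<le> norm ((norm (fst p))\<^sup>2 + (norm (snd p))\<^sup>2)" by simp
    qed
  qed
  show "integrable \<pi> (\<lambda>p. k \<bullet> snd p)"
    using coupling_integral_snd(1)[OF assms(1)
        borel_measurable_inner[OF borel_measurable_const measurable_ident_sets[OF refl]]]
      inner_mean_P2(1)[OF assms(3)]
    by simp
qed

lemma corr_le_half_second_moments:
  fixes \<mu> \<nu> :: "'a::euclidean_space measure"
  assumes "\<pi> \<in> couplings \<mu> \<nu>" "\<mu> \<in> P2" "\<nu> \<in> P2"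
  shows "corr \<pi> \<le> ((\<integral>x. (norm x)\<^sup>2 \<partial>\<mu>) + (\<integral>y. (norm y)\<^sup>2 \<partial>\<nu>)) / 2"
proof -
  note int = integrable_coupling_P2[OF assms]
  have sq: "(\<lambda>x::'a. (norm x)\<^sup>2) \<in> borel_measurable borel" by simp
  have "corr \<pi> \<le> (\<integral>p. ((norm (fst p))\<^sup>2 + (norm (snd p))\<^sup>2) / 2 \<partial>\<pi>)"
    unfolding corr_eq_integral
    by (rule integral_mono)
      (use int order_trans[OF abs_ge_self abs_inner_le_half_sum_squares] in auto)
  also have "\<dots> = ((\<integral>x. (norm x)\<^sup>2 \<partial>\<mu>) + (\<integral>y. (norm y)\<^sup>2 \<partial>\<nu>)) / 2"
    using int coupling_integral_fst(2)[OF assms(1) sq] coupling_integral_snd(2)[OF assms(1) sq]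
    by simp
  finally show ?thesis .
qed

lemma kdom_iff_corr:
  fixes \<mu> \<nu> :: "'a::euclidean_space measure"
  assumes "\<mu> \<in> P2" "\<nu> \<in> P20"
  shows "kdom \<mu> \<nu> \<longleftrightarrow> (\<exists>\<pi> \<in> couplings \<mu> \<nu>. corr \<pi> = (\<integral>x. (norm x)\<^sup>2 \<partial>\<mu>))"
proof -
  have \<nu>: "\<nu> \<in> P2" "mean \<nu> = 0" using assms(2) by (auto simp: P20_def)
  have eq: "(\<integral>(x, y). inner (x - mean \<nu>) (y - x) \<partial>\<pi>) = corr \<pi> - (\<integral>x. (norm x)\<^sup>2 \<partial>\<mu>)"
    if "\<pi> \<in> couplings \<mu> \<nu>" for \<pi>
  proof -
    have "(\<lambda>(x, y). inner (x - mean \<nu>) (y - x)) = (\<lambda>p. fst p \<bullet> snd p - (norm (fst p))\<^sup>2)"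
      using \<nu>(2) by (auto simp: inner_diff_right power2_norm_eq_inner)
    then show ?thesis
      using integrable_coupling_P2[OF that assms(1) \<nu>(1)]
        coupling_integral_fst(2)[OF that, of "\<lambda>x. (norm x)\<^sup>2"]
      by (simp add: corr_eq_integral)
  qed
  show ?thesis unfolding kdom_def by (intro bex_cong refl) (simp add: eq)
qed

definition affine_coupling :: "real \<Rightarrow> 'a::euclidean_space \<Rightarrow> ('a \<times> 'a) measure \<Rightarrow> ('a \<times> 'a) measure"
  where "affine_coupling t k \<pi> = distr \<pi> borel (\<lambda>p. (t *\<^sub>R (fst p + k), snd p))"

lemma affine_coupling_in_couplings:
  fixes \<mu> \<nu> :: "'a::euclidean_space measure"
  assumes "\<pi> \<in> couplings \<mu> \<nu>"
  shows "affine_coupling t k \<pi> \<in> couplings (distr \<mu> borel (\<lambda>x. t *\<^sub>R (x + k))) \<nu>"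
proof -
  note c = couplingsD[OF assms]
  interpret prob_space \<pi> using c by simp
  have g: "(\<lambda>p. (t *\<^sub>R (fst p + k), snd p)) \<in> measurable \<pi> (borel :: ('a \<times> 'a) measure)"
    by (rule continuous_measurable_sets_borel[OF c(2)]) (intro continuous_intros)
  have f: "(\<lambda>x. t *\<^sub>R (x + k)) \<in> measurable (borel :: 'a measure) borel"
    by (rule continuous_measurable_sets_borel[OF refl]) (intro continuous_intros)
  note fst_snd = measurable_fst_snd_sets_borel[of "borel :: ('a \<times> 'a) measure", OF refl]
  have "distr (affine_coupling t k \<pi>) borel fst = distr \<pi> borel ((\<lambda>x. t *\<^sub>R (x + k)) \<circ> fst)"
    unfolding affine_coupling_def distr_distr[OF fst_snd(1) g] by (simp add: comp_def)
  also have "\<dots> = distr \<mu> borel (\<lambda>x. t *\<^sub>R (x + k))"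
    using distr_distr[OF f measurable_fst_snd_sets_borel(1)[OF c(2)]] c(3) by simp
  finally have "distr (affine_coupling t k \<pi>) borel fst = distr \<mu> borel (\<lambda>x. t *\<^sub>R (x + k))" .
  moreover have "distr (affine_coupling t k \<pi>) borel snd = \<nu>"
    unfolding affine_coupling_def distr_distr[OF fst_snd(2) g] using c(4) by (simp add: comp_def)
  ultimately show ?thesis
    unfolding couplings_def using prob_space_distr[OF g] by (simp add: affine_coupling_def)
qed

lemma corr_affine_coupling:
  fixes \<mu> \<nu> :: "'a::euclidean_space measure"
  assumes "\<pi> \<in> couplings \<mu> \<nu>" "\<mu> \<in> P2" "\<nu> \<in> P2"
  shows "corr (affine_coupling t k \<pi>) = t * (corr \<pi> + k \<bullet> mean \<nu>)"
proof -
  have g: "(\<lambda>p. (t *\<^sub>R (fst p + k), snd p)) \<in> measurable \<pi> (borel :: ('a \<times> 'a) measure)"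
    by (rule continuous_measurable_sets_borel[OF couplingsD(2)[OF assms(1)]]) (intro continuous_intros)
  have inner: "(\<lambda>p::'a \<times> 'a. fst p \<bullet> snd p) \<in> borel_measurable borel"
    by (rule continuous_measurable_sets_borel[OF refl]) (intro continuous_intros)
  have "corr (affine_coupling t k \<pi>) = (\<integral>p. t * (fst p \<bullet> snd p) + t * (k \<bullet> snd p) \<partial>\<pi>)"
    unfolding corr_eq_integral affine_coupling_def integral_distr[OF g inner]
    by (simp add: inner_add_left algebra_simps)
  also have "\<dots> = t * corr \<pi> + t * (\<integral>p. k \<bullet> snd p \<partial>\<pi>)"
    unfolding corr_eq_integral integral_mult_right_zero[symmetric]
    by (rule Bochner_Integration.integral_add)
      (use integrable_coupling_P2(3)[OF assms] integrable_coupling_P2(4)[OF assms, of k] in simp_all)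
  also have "(\<integral>p. k \<bullet> snd p \<partial>\<pi>) = k \<bullet> mean \<nu>"
    using coupling_integral_snd(2)[OF assms(1)
        borel_measurable_inner[OF borel_measurable_const measurable_ident_sets[OF refl]]]
      inner_mean_P2(2)[OF assms(3)]
    by simp
  finally show ?thesis by (simp add: distrib_left)
qed

lemma dil1_eq_affine_coupling: "dil1 t \<pi> = affine_coupling t 0 \<pi>"
  unfolding dil1_def affine_coupling_def by (simp add: case_prod_unfold)

lemma dil1_in_couplings:
  "\<pi> \<in> couplings \<mu> \<nu> \<Longrightarrow> dil1 t \<pi> \<in> couplings (dil t \<mu>) \<nu>"
  unfolding dil1_eq_affine_coupling dil_eq_affine_image by (rule affine_coupling_in_couplings)

lemma corr_dil1:
  "\<pi> \<in> couplings \<mu> \<nu> \<Longrightarrow> \<mu> \<in> P2 \<Longrightarrow> \<nu> \<in> P2 \<Longrightarrow> corr (dil1 t \<pi>) = t * corr \<pi>"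
  using corr_affine_coupling[of \<pi> \<mu> \<nu> t 0] by (simp add: dil1_eq_affine_coupling)

lemma return_zero_coupling:
  fixes \<nu> :: "'a::euclidean_space measure"
  assumes "\<nu> \<in> P2"
  shows "distr \<nu> borel (\<lambda>y. (0, y)) \<in> couplings (return borel 0) \<nu>"
    and "corr (distr \<nu> borel (\<lambda>y. (0, y))) = 0"
proof -
  have g: "(\<lambda>y. (0::'a, y)) \<in> measurable \<nu> borel"
    by (rule continuous_measurable_sets_borel[OF P2D(2)[OF assms]]) (intro continuous_intros)
  note fst_snd = measurable_fst_snd_sets_borel[of "borel :: ('a \<times> 'a) measure", OF refl]
  have "distr (distr \<nu> borel (\<lambda>y. (0::'a, y))) borel fst = distr \<nu> borel (fst \<circ> (\<lambda>y. (0::'a, y)))"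
    by (rule distr_distr[OF fst_snd(1) g])
  also have "\<dots> = return borel 0"
    using prob_space.distr_const[OF P2D(1)[OF assms], of 0 borel] by (simp add: comp_def)
  finally have "distr (distr \<nu> borel (\<lambda>y. (0::'a, y))) borel fst = return borel 0" .
  moreover have "distr (distr \<nu> borel (\<lambda>y. (0::'a, y))) borel snd = distr \<nu> borel (snd \<circ> (\<lambda>y. (0::'a, y)))"
    by (rule distr_distr[OF fst_snd(2) g])
  then have "distr (distr \<nu> borel (\<lambda>y. (0::'a, y))) borel snd = \<nu>"
    using distr_id2[OF sym[OF P2D(2)[OF assms]]] by (simp add: comp_def)
  ultimately show "distr \<nu> borel (\<lambda>y. (0::'a, y)) \<in> couplings (return borel 0) \<nu>"
    unfolding couplings_def using prob_space.prob_space_distr[OF P2D(1)[OF assms] g] by simp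
  have inner: "(\<lambda>p::'a \<times> 'a. fst p \<bullet> snd p) \<in> borel_measurable borel"
    by (rule continuous_measurable_sets_borel[OF refl]) (intro continuous_intros)
  show "corr (distr \<nu> borel (\<lambda>y. (0::'a, y))) = 0"
    unfolding corr_eq_integral integral_distr[OF g inner] by simp
qed

lemma dil_corr_div_Var_MK:
  fixes \<mu> \<nu> :: "'a::euclidean_space measure"
  assumes "\<mu> \<in> P20" "\<nu> \<in> P20" "\<pi> \<in> couplings \<mu> \<nu>" "Var \<mu> > 0"
  shows "dil (corr \<pi> / Var \<mu>) \<mu> \<in> MK \<nu>"
proof -
  define t where "t = corr \<pi> / Var \<mu>"
  have \<mu>: "\<mu> \<in> P2" and \<nu>: "\<nu> \<in> P2" using assms(1,2) by (auto simp: P20_def)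
  have "corr (dil1 t \<pi>) = t * corr \<pi>" by (rule corr_dil1[OF assms(3) \<mu> \<nu>])
  also have "\<dots> = t\<^sup>2 * Var \<mu>" using assms(4) by (simp add: t_def power2_eq_square)
  also have "\<dots> = (\<integral>x. (norm x)\<^sup>2 \<partial>dil t \<mu>)" using P2_dil(4)[OF \<mu>] second_moment_P20[OF assms(1)] by simp
  finally have "kdom (dil t \<mu>) \<nu>"
    using kdom_iff_corr[OF P2_dil(1)[OF \<mu>] assms(2)] dil1_in_couplings[OF assms(3)] by blast
  then show ?thesis unfolding MK_def t_def using P2_dil(1)[OF \<mu>] by simp
qed

subsection \<open>The value \<open>P1\<close> of a translation invariant cone\<close>

definition P1_set :: "'a::euclidean_space measure set \<Rightarrow> 'a measure \<Rightarrow> real set" where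
  "P1_set D \<nu> = {corr \<pi> | \<mu> \<pi>. \<mu> \<in> D \<inter> P20 \<and> \<pi> \<in> couplings \<mu> \<nu> \<and> Var \<mu> \<le> 1}"

lemma P1_eq_Sup: "P1 D \<nu> = Sup (P1_set D \<nu>)"
  unfolding P1_def P1_set_def ..

lemma P1_setI: "\<mu> \<in> D \<Longrightarrow> \<mu> \<in> P20 \<Longrightarrow> \<pi> \<in> couplings \<mu> \<nu> \<Longrightarrow> Var \<mu> \<le> 1 \<Longrightarrow> corr \<pi> \<in> P1_set D \<nu>"
  unfolding P1_set_def by blast

lemma P1_setE:
  assumes "c \<in> P1_set D \<nu>"
  obtains \<mu> \<pi> where "\<mu> \<in> D" "\<mu> \<in> P20" "\<pi> \<in> couplings \<mu> \<nu>" "Var \<mu> \<le> 1" "c = corr \<pi>"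
  using assms unfolding P1_set_def by blast

locale translation_invariant_cone =
  fixes \<nu> :: "'a::euclidean_space measure" and D :: "'a measure set"
  assumes \<nu>_P20: "\<nu> \<in> P20" and D_P2: "D \<subseteq> P2" and D_nonempty: "D \<noteq> {}"
    and cone: "is_cone D" and translation_invariant: "transl_inv D"
begin

lemma \<nu>_P2: "\<nu> \<in> P2"
  using \<nu>_P20 by (simp add: P20_def)

lemma dil_in_D: "\<mu> \<in> D \<Longrightarrow> t \<ge> 0 \<Longrightarrow> dil t \<mu> \<in> D"
  using cone unfolding is_cone_def by blast

lemma affine_image_in_D:
  assumes "\<mu> \<in> D" "t \<ge> 0"
  shows "distr \<mu> borel (\<lambda>x. t *\<^sub>R (x + k)) \<in> D"
proof -
  have sets: "sets \<mu> = sets borel" using assms(1) D_P2 P2D(2) by blast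
  have translate: "(\<lambda>x. x + k) \<in> measurable \<mu> borel"
    by (rule continuous_measurable_sets_borel[OF sets]) (intro continuous_intros)
  have scale: "(\<lambda>x. t *\<^sub>R x) \<in> measurable (borel :: 'a measure) borel"
    by (rule continuous_measurable_sets_borel[OF refl]) (intro continuous_intros)
  have "distr \<mu> borel (\<lambda>x. x + k) \<in> D"
    using translation_invariant assms(1) unfolding transl_inv_def by blast
  then have "dil t (distr \<mu> borel (\<lambda>x. x + k)) \<in> D" using dil_in_D assms(2) by blast
  then show ?thesis unfolding dil_def distr_distr[OF scale translate] by (simp add: comp_def)
qed

lemma return_zero_in_D: "return borel (0::'a) \<in> D"
proof -
  obtain \<mu> where "\<mu> \<in> D" using D_nonempty by auto
  moreover have "dil 0 \<mu> = return borel 0" using calculation D_P2 P2D(1) dil_zero_eq_return by blast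
  ultimately show ?thesis using dil_in_D[of \<mu> 0] by simp
qed

lemma return_zero_P20: "return borel (0::'a) \<in> P20" and Var_return_zero: "Var (return borel (0::'a)) = 0"
  using P2_dil[OF \<nu>_P2, of 0] dil_zero_eq_return[OF P2D(1)[OF \<nu>_P2]] by (simp_all add: P20_def)

lemma return_zero_MK: "return borel 0 \<in> MK \<nu>"
  using return_zero_P20 return_zero_coupling[OF \<nu>_P2] kdom_iff_corr[OF _ \<nu>_P20]
    second_moment_P20[OF return_zero_P20] Var_return_zero
  by (auto simp: MK_def P20_def)

lemma zero_in_P1_set: "0 \<in> P1_set D \<nu>"
  using P1_setI[OF return_zero_in_D return_zero_P20 return_zero_coupling(1)[OF \<nu>_P2]]
    return_zero_coupling(2)[OF \<nu>_P2] Var_return_zero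
  by simp

lemma bdd_above_P1_set: "bdd_above (P1_set D \<nu>)"
proof (rule bdd_aboveI)
  fix c assume "c \<in> P1_set D \<nu>"
  then obtain \<mu> \<pi> where \<mu>: "\<mu> \<in> P20" "\<pi> \<in> couplings \<mu> \<nu>" "Var \<mu> \<le> 1" "c = corr \<pi>"
    by (rule P1_setE)
  have "c \<le> ((\<integral>x. (norm x)\<^sup>2 \<partial>\<mu>) + (\<integral>y. (norm y)\<^sup>2 \<partial>\<nu>)) / 2"
    using corr_le_half_second_moments[OF \<mu>(2) _ \<nu>_P2] \<mu> by (simp add: P20_def)
  then show "c \<le> (1 + (\<integral>y. (norm y)\<^sup>2 \<partial>\<nu>)) / 2"
    using second_moment_P20[OF \<mu>(1)] \<mu>(3) by simp
qed

lemma corr_le_P1: "c \<in> P1_set D \<nu> \<Longrightarrow> c \<le> P1 D \<nu>"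
  unfolding P1_eq_Sup by (rule cSup_upper[OF _ bdd_above_P1_set])

lemma P1_nonneg: "0 \<le> P1 D \<nu>"
  by (rule corr_le_P1[OF zero_in_P1_set])

text \<open>A degenerate centred measure in \<open>D\<close> with positive correlation could be scaled up
  without changing its variance, making \<open>P1\<close> infinite.\<close>

lemma Var_pos_of_corr_pos:
  assumes "\<mu> \<in> D" "\<mu> \<in> P20" "\<pi> \<in> couplings \<mu> \<nu>" "corr \<pi> > 0"
  shows "Var \<mu> > 0"
proof (rule ccontr)
  assume "\<not> Var \<mu> > 0"
  then have Var0: "Var \<mu> = 0" by (simp add: less_le)
  have \<mu>: "\<mu> \<in> P2" using assms(2) by (simp add: P20_def)
  have scaled: "t * corr \<pi> \<in> P1_set D \<nu>" if "t \<ge> 0" for t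
  proof -
    have "corr (dil1 t \<pi>) \<in> P1_set D \<nu>"
      using P1_setI[OF dil_in_D[OF assms(1) that] _ dil1_in_couplings[OF assms(3)]]
        P2_dil[OF \<mu>, of t] assms(2) Var0 by (simp add: P20_def)
    then show ?thesis using corr_dil1[OF assms(3) \<mu> \<nu>_P2] by simp
  qed
  obtain B where B: "\<And>c. c \<in> P1_set D \<nu> \<Longrightarrow> c \<le> B"
    using bdd_above_P1_set unfolding bdd_above_def by blast
  have "(\<bar>B\<bar> + 1) / corr \<pi> * corr \<pi> \<le> B"
    using assms(4) by (intro B scaled) simp
  then show False using assms(4) by simp
qed

lemma second_moment_le_P1_sqrt_Var:
  assumes "\<mu> \<in> D" "\<mu> \<in> MK \<nu>" "Var \<mu> > 0"
  shows "Var \<mu> + (norm (mean \<mu>))\<^sup>2 \<le> P1 D \<nu> * sqrt (Var \<mu>)"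
proof -
  have \<mu>: "\<mu> \<in> P2" and "kdom \<mu> \<nu>" using assms(2) by (auto simp: MK_def)
  then obtain \<pi> where \<pi>: "\<pi> \<in> couplings \<mu> \<nu>" "corr \<pi> = (\<integral>x. (norm x)\<^sup>2 \<partial>\<mu>)"
    using kdom_iff_corr[OF \<mu> \<nu>_P20] by blast
  define s where "s = 1 / sqrt (Var \<mu>)"
  define \<mu>' where "\<mu>' = distr \<mu> borel (\<lambda>x. s *\<^sub>R (x + - mean \<mu>))"
  have "s > 0" using assms(3) by (simp add: s_def)
  then have "\<mu>' \<in> D" unfolding \<mu>'_def by (rule affine_image_in_D[OF assms(1) less_imp_le])
  moreover have "\<mu>' \<in> P20" and "Var \<mu>' \<le> 1"
    using P2_affine_image[OF \<mu>, of s "- mean \<mu>"] assms(3)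
    by (simp_all add: \<mu>'_def P20_def s_def power_divide)
  moreover have "affine_coupling s (- mean \<mu>) \<pi> \<in> couplings \<mu>' \<nu>"
    unfolding \<mu>'_def by (rule affine_coupling_in_couplings[OF \<pi>(1)])
  ultimately have le: "corr (affine_coupling s (- mean \<mu>) \<pi>) \<le> P1 D \<nu>"
    by (intro corr_le_P1 P1_setI)
  have "Var \<mu> + (norm (mean \<mu>))\<^sup>2 = sqrt (Var \<mu>) * corr (affine_coupling s (- mean \<mu>) \<pi>)"
    using corr_affine_coupling[OF \<pi>(1) \<mu> \<nu>_P2] \<pi>(2) Var_eq_second_moment[OF \<mu>] \<nu>_P20 assms(3)
    by (simp add: P20_def s_def)
  also have "\<dots> \<le> sqrt (Var \<mu>) * P1 D \<nu>" using le by (rule mult_left_mono) simp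
  finally show ?thesis by (simp add: mult.commute)
qed

lemma Var_le_P1_sq:
  assumes "\<mu> \<in> D" "\<mu> \<in> MK \<nu>"
  shows "Var \<mu> \<le> (P1 D \<nu>)\<^sup>2"
proof (cases "Var \<mu> > 0")
  case True
  have "Var \<mu> \<le> P1 D \<nu> * sqrt (Var \<mu>)"
    using second_moment_le_P1_sqrt_Var[OF assms True] zero_le_power2[of "norm (mean \<mu>)"]
    by linarith
  then have "sqrt (Var \<mu>) * sqrt (Var \<mu>) \<le> P1 D \<nu> * sqrt (Var \<mu>)" using True by simp
  then have "sqrt (Var \<mu>) \<le> P1 D \<nu>" by (rule mult_right_le_imp_le) (use True in simp)
  then have "(sqrt (Var \<mu>))\<^sup>2 \<le> (P1 D \<nu>)\<^sup>2" by (rule power_mono) simp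
  then show ?thesis using True by simp
next
  case False
  then show ?thesis by (simp add: less_le)
qed

lemma P1_le_sqrt_Var_bound:
  assumes bound: "\<And>\<mu>. \<mu> \<in> D \<Longrightarrow> \<mu> \<in> MK \<nu> \<Longrightarrow> Var \<mu> \<le> V"
  shows "P1 D \<nu> \<le> sqrt V"
  unfolding P1_eq_Sup
proof (rule cSup_least)
  show "P1_set D \<nu> \<noteq> {}" using zero_in_P1_set by blast
  have "0 \<le> V" using bound[OF return_zero_in_D return_zero_MK] Var_return_zero by simp
  fix c assume "c \<in> P1_set D \<nu>"
  then obtain \<mu> \<pi> where \<mu>: "\<mu> \<in> D" "\<mu> \<in> P20" "\<pi> \<in> couplings \<mu> \<nu>" "Var \<mu> \<le> 1" "c = corr \<pi>"
    by (rule P1_setE)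
  show "c \<le> sqrt V"
  proof (cases "c > 0")
    case True
    have Var_pos: "Var \<mu> > 0" using Var_pos_of_corr_pos[OF \<mu>(1-3)] True \<mu>(5) by simp
    have "dil (c / Var \<mu>) \<mu> \<in> D" using dil_in_D[OF \<mu>(1)] True Var_pos by simp
    moreover have "dil (c / Var \<mu>) \<mu> \<in> MK \<nu>"
      using dil_corr_div_Var_MK[OF \<mu>(2) \<nu>_P20 \<mu>(3) Var_pos] \<mu>(5) by simp
    ultimately have "(c / Var \<mu>)\<^sup>2 * Var \<mu> \<le> V"
      using bound P2_dil(3) \<mu>(2) by (fastforce simp: P20_def)
    then have "c\<^sup>2 / Var \<mu> \<le> V" using Var_pos by (simp add: power2_eq_square)
    moreover have "c\<^sup>2 \<le> c\<^sup>2 / Var \<mu>"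
      using Var_pos \<mu>(4) by (simp add: le_divide_eq mult_left_le)
    ultimately show ?thesis by (simp add: real_le_rsqrt)
  next
    case False
    then show ?thesis using \<open>0 \<le> V\<close> by (meson not_less order_trans real_sqrt_ge_zero)
  qed
qed

lemma P1_eq_sqrt_max_Var:
  assumes "maximizes_Var (D \<inter> MK \<nu>) \<mu>"
  shows "P1 D \<nu> = sqrt (Var \<mu>)"
proof (rule antisym)
  show "P1 D \<nu> \<le> sqrt (Var \<mu>)"
    by (rule P1_le_sqrt_Var_bound) (use assms in \<open>auto simp: maximizes_Var_def\<close>)
  have "Var \<mu> \<le> (P1 D \<nu>)\<^sup>2" using Var_le_P1_sq assms by (auto simp: maximizes_Var_def)
  then show "sqrt (Var \<mu>) \<le> P1 D \<nu>" using P1_nonneg by (rule real_le_lsqrt[rotated])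
qed

lemma attains_P1_maximizes_Var:
  assumes "P1 D \<nu> > 0" "attains_P1 D \<nu> \<mu> \<pi>"
  shows "Var \<mu> = 1" and "maximizes_Var (D \<inter> MK \<nu>) (dil (P1 D \<nu>) \<mu>)"
proof -
  have \<mu>: "\<mu> \<in> D" "\<mu> \<in> P20" "\<pi> \<in> couplings \<mu> \<nu>" "Var \<mu> \<le> 1" and corr: "corr \<pi> = P1 D \<nu>"
    using assms(2) unfolding attains_P1_def by auto
  have Var_pos: "Var \<mu> > 0" using Var_pos_of_corr_pos[OF \<mu>(1-3)] assms(1) corr by simp
  define \<mu>' where "\<mu>' = dil (P1 D \<nu> / Var \<mu>) \<mu>"
  have \<mu>': "\<mu>' \<in> D" "\<mu>' \<in> MK \<nu>"
    using dil_in_D[OF \<mu>(1)] dil_corr_div_Var_MK[OF \<mu>(2) \<nu>_P20 \<mu>(3) Var_pos] assms(1) Var_pos corr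
    by (simp_all add: \<mu>'_def)
  have Var': "Var \<mu>' = (P1 D \<nu>)\<^sup>2 / Var \<mu>"
    using P2_dil(3)[of \<mu>] \<mu>(2) Var_pos by (simp add: \<mu>'_def P20_def power2_eq_square)
  then have "(P1 D \<nu>)\<^sup>2 / Var \<mu> \<le> (P1 D \<nu>)\<^sup>2" using Var_le_P1_sq[OF \<mu>'] by simp
  then have "1 \<le> Var \<mu>" using Var_pos assms(1) by (simp add: divide_le_eq)
  then show Var1: "Var \<mu> = 1" using \<mu>(4) by simp
  show "maximizes_Var (D \<inter> MK \<nu>) (dil (P1 D \<nu>) \<mu>)"
    using \<mu>' Var' Var1 Var_le_P1_sq by (auto simp: maximizes_Var_def \<mu>'_def)
qed

lemma maximizer_attains_P1:
  assumes "P1 D \<nu> > 0" and max: "maximizes_Var (D \<inter> MK \<nu>) \<mu>"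
    and \<pi>: "\<pi> \<in> couplings \<mu> \<nu>" "\<forall>\<pi>' \<in> couplings \<mu> \<nu>. corr \<pi>' \<le> corr \<pi>"
  shows "attains_P1 D \<nu> (dil (1 / sqrt (Var \<mu>)) \<mu>) (dil1 (1 / sqrt (Var \<mu>)) \<pi>)"
proof -
  have \<mu>: "\<mu> \<in> D" "\<mu> \<in> MK \<nu>" using max by (auto simp: maximizes_Var_def)
  then have \<mu>_P2: "\<mu> \<in> P2" by (simp add: MK_def)
  have P1: "P1 D \<nu> = sqrt (Var \<mu>)" by (rule P1_eq_sqrt_max_Var[OF max])
  then have Var_pos: "Var \<mu> > 0" using assms(1) by simp
  have "Var \<mu> + (norm (mean \<mu>))\<^sup>2 \<le> Var \<mu>"
    using second_moment_le_P1_sqrt_Var[OF \<mu> Var_pos] P1 by simp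
  then have \<mu>_P20: "\<mu> \<in> P20" using \<mu>_P2 by (simp add: P20_def)
  obtain \<pi>\<^sub>0 where "\<pi>\<^sub>0 \<in> couplings \<mu> \<nu>" "corr \<pi>\<^sub>0 = Var \<mu>"
    using \<mu>(2) kdom_iff_corr[OF \<mu>_P2 \<nu>_P20] second_moment_P20[OF \<mu>_P20] by (auto simp: MK_def)
  then have Var_le_corr: "Var \<mu> \<le> corr \<pi>" using \<pi>(2) by force
  define l where "l = 1 / sqrt (Var \<mu>)"
  have admissible: "dil l \<mu> \<in> D" "dil l \<mu> \<in> P20" "dil1 l \<pi> \<in> couplings (dil l \<mu>) \<nu>" "Var (dil l \<mu>) = 1"
    using dil_in_D[OF \<mu>(1)] P2_dil[OF \<mu>_P2, of l] \<mu>_P20 dil1_in_couplings[OF \<pi>(1)] Var_pos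
    by (simp_all add: l_def P20_def power_divide)
  have "P1 D \<nu> = l * Var \<mu>" using P1 Var_pos by (simp add: l_def real_div_sqrt)
  also have "\<dots> \<le> l * corr \<pi>" using Var_le_corr Var_pos by (simp add: l_def divide_right_mono)
  also have "\<dots> = corr (dil1 l \<pi>)" using corr_dil1[OF \<pi>(1) \<mu>_P2 \<nu>_P2] by simp
  finally have "P1 D \<nu> = corr (dil1 l \<pi>)"
    using corr_le_P1[OF P1_setI[OF admissible(1-3)]] admissible(4) by simp
  then show ?thesis using admissible unfolding attains_P1_def l_def by simp
qed

lemma return_zero_maximizes_Var:
  assumes "P1 D \<nu> = 0"
  shows "maximizes_Var (D \<inter> MK \<nu>) (return borel 0)"
  using Var_le_P1_sq return_zero_in_D return_zero_MK Var_return_zero assms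
  by (auto simp: maximizes_Var_def)

lemma P1_eq_0_iff: "P1 D \<nu> = 0 \<longleftrightarrow> (\<exists>\<mu>. maximizes_Var (D \<inter> MK \<nu>) \<mu> \<and> Var \<mu> = 0)"
  using return_zero_maximizes_Var Var_return_zero P1_eq_sqrt_max_Var by auto

end

theorem mainTheorem20:
  fixes \<nu> :: "'a::euclidean_space measure" and D :: "'a measure set"
  assumes "\<nu> \<in> P20" and "D \<subseteq> P2" and "D \<noteq> {}" and "is_cone D" and "transl_inv D"
  shows "(P1 D \<nu> > 0 \<longrightarrow>
            (\<forall>\<mu> \<pi>. attains_P1 D \<nu> \<mu> \<pi> \<longrightarrow>
               Var \<mu> = 1 \<and> maximizes_Var (D \<inter> MK \<nu>) (dil (P1 D \<nu>) \<mu>))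
          \<and> (\<forall>\<mu> \<pi>. maximizes_Var (D \<inter> MK \<nu>) \<mu> \<and> \<mu> \<noteq> return borel 0
               \<and> \<pi> \<in> couplings \<mu> \<nu> \<and> (\<forall>\<pi>' \<in> couplings \<mu> \<nu>. corr \<pi>' \<le> corr \<pi>) \<longrightarrow>
               attains_P1 D \<nu> (dil (1 / sqrt (Var \<mu>)) \<mu>) (dil1 (1 / sqrt (Var \<mu>)) \<pi>)))
       \<and> (P1 D \<nu> = 0 \<longleftrightarrow> (\<exists>\<mu>. maximizes_Var (D \<inter> MK \<nu>) \<mu> \<and> Var \<mu> = 0))
       \<and> (P1 D \<nu> = 0 \<longrightarrow> maximizes_Var (D \<inter> MK \<nu>) (return borel 0))"
proof -
  interpret translation_invariant_cone \<nu> D using assms by unfold_locales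
  show ?thesis
    using attains_P1_maximizes_Var maximizer_attains_P1 P1_eq_0_iff return_zero_maximizes_Var
    by blast
qed

end
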